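(* Let $p,q\in(0,1/2)$ and suppose $K_{pq}$ is a twofold Cantor set. Then the Hausdorff dimension $d=\dim_H K_{pq}$ satisfies $p^d+q^d-(pq)^d=1/2$.
   Context: For $p,q\in(0,1/2)$ let $S_1(x)=px$, $S_2(x)=qx$, $S_3(x)=px+1-p$, $S_4(x)=qx+1-q$, let $K_{pq}$ be the attractor of $\{S_1,S_2,S_3,S_4\}$ (the unique nonempty compact $K\subset\mathbb R$ with $K=\bigcup_{i=1}^4S_i(K)$), and let $A=S_3(K_{pq})\cup S_4(K_{pq})$. $K_{pq}$ is called a twofold Cantor set if $S_1^m(A)\cap S_2^n(A)=\varnothing$ for all $m,n\in\mathbb N$. *)

theory Defs
  imports "HOL-Analysis.Analysis"
begin

definition hweight :: "real \<Rightarrow> real set \<Rightarrow> real" where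
  "hweight s U = (if U = {} then 0 else if s = 0 then 1 else diameter U powr s)"

definition hausdorff_pre :: "real \<Rightarrow> real \<Rightarrow> real set \<Rightarrow> ennreal" where
  "hausdorff_pre s \<delta> E =
     (INF U \<in> {U :: nat \<Rightarrow> real set. E \<subseteq> (\<Union>i. U i) \<and>
                 (\<forall>i. bounded (U i) \<and> diameter (U i) \<le> \<delta>)}.
        (\<Sum>i. ennreal (hweight s (U i))))"

definition hausdorff_measure :: "real \<Rightarrow> real set \<Rightarrow> ennreal" where
  "hausdorff_measure s E = (SUP \<delta> \<in> {0<..}. hausdorff_pre s \<delta> E)"

definition hausdorff_dim :: "real set \<Rightarrow> real" where
  "hausdorff_dim E = Inf {s. 0 \<le> s \<and> hausdorff_measure s E = 0}"

definition S1 :: "real \<Rightarrow> real \<Rightarrow> real" where "S1 p x = p * x"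
definition S2 :: "real \<Rightarrow> real \<Rightarrow> real" where "S2 q x = q * x"
definition S3 :: "real \<Rightarrow> real \<Rightarrow> real" where "S3 p x = p * x + 1 - p"
definition S4 :: "real \<Rightarrow> real \<Rightarrow> real" where "S4 q x = q * x + 1 - q"

definition Kpq :: "real \<Rightarrow> real \<Rightarrow> real set" where
  "Kpq p q = (THE K. compact K \<and> K \<noteq> {} \<and>
      K = S1 p ` K \<union> S2 q ` K \<union> S3 p ` K \<union> S4 q ` K)"

definition Apq :: "real \<Rightarrow> real \<Rightarrow> real set" where
  "Apq p q = S3 p ` Kpq p q \<union> S4 q ` Kpq p q"

text \<open>Twofold Cantor set; here the natural numbers start at 1 (for m = 0 or n = 0
  the condition would fail trivially).\<close>
definition twofold_cantor :: "real \<Rightarrow> real \<Rightarrow> bool" where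
  "twofold_cantor p q = (\<forall>m n :: nat. m \<ge> 1 \<longrightarrow> n \<ge> 1 \<longrightarrow>
      ((S1 p ^^ m) ` Apq p q) \<inter> ((S2 q ^^ n) ` Apq p q) = {})"

end

theory Submission
  imports Defs
begin

(*
  Since the maps come in reflected pairs, K is symmetric about 1/2, and K = A \<union> B with
  B = pK \<union> qK and A = 1 - B.  Unfolding B = p(A \<union> B) \<union> q(A \<union> B) for N generations gives
    B \<subseteq> \<Union>{p^m q^n A | 0 < m+n < N} \<union> \<Union>{p^m q^n K | m+n = N},
  so, with a = p^s and b = q^s, a cover of B of s-weight t yields another one of weight at most
    (1/((1-a)(1-b)) - 1 + 2(N+1) max(a,b)^N) t.
  If g(s) = (1 - p^s)(1 - q^s) > 1/2, this factor is < 1 for large N and H^s(K) = 0.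
  If g(s) < 1/2, then \<Sum> a^m b^n over (m,n) \<noteq> (0,0), m,n < N, exceeds 1 for large N; the
  corresponding copies p^m q^n A lie in B, are mapped onto B by x \<mapsto> 1 - x/(p^m q^n), and are
  pairwise disjoint by the twofold Cantor condition, which forces H^s(B) > 0.
  Hence dim K is the root d of g(d) = 1/2, i.e. p^d + q^d - (pq)^d = 1/2.
*)

lemma bounded_affine_image:
  fixes U :: "real set"
  assumes "bounded U"
  shows "bounded ((\<lambda>x. a*x+b) ` U)"
proof -
  have "(\<lambda>x. a*x+b) ` U = (\<lambda>x. b + x) ` ((\<lambda>x. a *\<^sub>R x) ` U)"
    by (auto simp: image_image add.commute)
  then show ?thesis
    using bounded_translation[OF bounded_scaling[OF assms]] by metis
qed

lemma diameter_affine_le: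
  fixes U :: "real set"
  assumes "bounded U"
  shows "diameter ((\<lambda>x. a*x+b) ` U) \<le> \<bar>a\<bar> * diameter U"
proof (rule diameter_le)
  show "(\<lambda>x. a*x+b) ` U \<noteq> {} \<or> 0 \<le> \<bar>a\<bar> * diameter U"
    using diameter_ge_0[OF assms] by auto
  fix x y assume "x \<in> (\<lambda>x. a*x+b) ` U" "y \<in> (\<lambda>x. a*x+b) ` U"
  then obtain x' y' where xy: "x' \<in> U" "y' \<in> U" "x = a*x'+b" "y = a*y'+b" by auto
  have "norm (x - y) = \<bar>a\<bar> * \<bar>x'-y'\<bar>" using xy by (simp add: abs_mult[symmetric] algebra_simps)
  also have "\<dots> \<le> \<bar>a\<bar> * diameter U"
    using diameter_bounded_bound[OF assms xy(1,2)] by (simp add: mult_left_mono dist_real_def)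
  finally show "norm (x - y) \<le> \<bar>a\<bar> * diameter U" .
qed

lemma diameter_affine:
  fixes U :: "real set"
  assumes "bounded U" "a \<noteq> 0"
  shows "diameter ((\<lambda>x. a*x+b) ` U) = \<bar>a\<bar> * diameter U"
proof (rule antisym)
  show "diameter ((\<lambda>x. a*x+b) ` U) \<le> \<bar>a\<bar> * diameter U" by (rule diameter_affine_le[OF assms(1)])
  have "(\<lambda>x. (1/a)*x + (-b/a)) ` ((\<lambda>x. a*x+b) ` U) = U"
    unfolding image_image using assms(2) by (simp add: field_simps)
  then have "diameter U \<le> \<bar>1/a\<bar> * diameter ((\<lambda>x. a*x+b) ` U)"
    using diameter_affine_le[OF bounded_affine_image[OF assms(1)], of "1/a" "-b/a" a b] by simp
  then show "\<bar>a\<bar> * diameter U \<le> diameter ((\<lambda>x. a*x+b) ` U)"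
    using assms(2) by (simp add: field_simps)
qed

lemma hweight_nonneg: "0 \<le> hweight s U"
  by (simp add: hweight_def)

lemma hweight_affine:
  fixes U :: "real set"
  assumes "bounded U" "a \<noteq> 0" "0 < s"
  shows "hweight s ((\<lambda>x. a*x+b) ` U) = \<bar>a\<bar> powr s * hweight s U"
  using assms by (simp add: hweight_def diameter_affine powr_mult)

lemma sum_hweight_affine_image_le:
  fixes \<U> :: "real set set"
  assumes "finite \<U>" "\<And>U. U \<in> \<U> \<Longrightarrow> bounded U" "a \<noteq> 0" "0 < s"
  shows "(\<Sum>V\<in>(\<lambda>U. (\<lambda>x. a*x+b) ` U) ` \<U>. hweight s V) \<le> \<bar>a\<bar> powr s * (\<Sum>U\<in>\<U>. hweight s U)"
proof -
  have "(\<Sum>V\<in>(\<lambda>U. (\<lambda>x. a*x+b) ` U) ` \<U>. hweight s V) \<le> (\<Sum>U\<in>\<U>. hweight s ((\<lambda>x. a*x+b) ` U))"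
    using sum_image_le[OF assms(1), where g="hweight s"] by (simp add: hweight_nonneg o_def)
  also have "\<dots> = \<bar>a\<bar> powr s * (\<Sum>U\<in>\<U>. hweight s U)"
    using assms by (simp add: hweight_affine sum_distrib_left)
  finally show ?thesis .
qed

section \<open>Lower bounds for Hausdorff measure\<close>

lemma hausdorff_measure_mono:
  assumes "E \<subseteq> F"
  shows "hausdorff_measure s E \<le> hausdorff_measure s F"
  unfolding hausdorff_measure_def hausdorff_pre_def
  by (intro SUP_mono' INF_superset_mono) (use assms in auto)

lemma hausdorff_measure_ge_pre: "0 < \<delta> \<Longrightarrow> hausdorff_pre s \<delta> E \<le> hausdorff_measure s E"
  unfolding hausdorff_measure_def by (rule SUP_upper) simp

lemma hausdorff_measure_zero_dim_nonempty:
  assumes "E \<noteq> {}"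
  shows "hausdorff_measure 0 E \<noteq> 0"
proof -
  have "1 \<le> (\<Sum>i. ennreal (hweight 0 (U i)))" if cov: "E \<subseteq> (\<Union>i. U i)" for U
  proof -
    obtain i where "U i \<noteq> {}" using cov assms by blast
    then have "ennreal (hweight 0 (U i)) = 1" by (simp add: hweight_def)
    moreover have "ennreal (hweight 0 (U i)) \<le> (\<Sum>j. ennreal (hweight 0 (U j)))"
      using sum_le_suminf[of "\<lambda>j. ennreal (hweight 0 (U j))" "{i}"] by simp
    ultimately show ?thesis by simp
  qed
  then have "1 \<le> hausdorff_pre 0 1 E"
    unfolding hausdorff_pre_def by (auto intro: INF_greatest)
  also have "\<dots> \<le> hausdorff_measure 0 E" by (rule hausdorff_measure_ge_pre) simp
  finally show ?thesis by auto
qed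

lemma finite_family_uniform_gap:
  fixes P :: "'i \<Rightarrow> real set"
  assumes "finite I" "\<And>i. i \<in> I \<Longrightarrow> compact (P i)"
    and "\<And>i j. i \<in> I \<Longrightarrow> j \<in> I \<Longrightarrow> i \<noteq> j \<Longrightarrow> P i \<inter> P j = {}"
  obtains \<delta> where "0 < \<delta>"
    "\<And>i j x y. i \<in> I \<Longrightarrow> j \<in> I \<Longrightarrow> i \<noteq> j \<Longrightarrow> x \<in> P i \<Longrightarrow> y \<in> P j \<Longrightarrow> \<delta> \<le> \<bar>x - y\<bar>"
proof -
  define pairs where "pairs = {ij \<in> I \<times> I. fst ij \<noteq> snd ij}"
  have "\<forall>ij\<in>pairs. \<exists>d>0. \<forall>x\<in>P (fst ij). \<forall>y\<in>P (snd ij). d \<le> dist x y"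
  proof
    fix ij assume "ij \<in> pairs"
    then have "fst ij \<in> I" "snd ij \<in> I" "fst ij \<noteq> snd ij" by (auto simp: pairs_def)
    then show "\<exists>d>0. \<forall>x\<in>P (fst ij). \<forall>y\<in>P (snd ij). d \<le> dist x y"
      using assms(2,3) by (intro separate_compact_closed) (auto intro: compact_imp_closed)
  qed
  then obtain d where d: "\<And>ij. ij \<in> pairs \<Longrightarrow> 0 < d ij"
    "\<And>ij x y. ij \<in> pairs \<Longrightarrow> x \<in> P (fst ij) \<Longrightarrow> y \<in> P (snd ij) \<Longrightarrow> d ij \<le> dist x y"
    by metis
  have fin: "finite (insert 1 (d ` pairs))" using assms(1) by (simp add: pairs_def)
  show ?thesis
  proof
    show "0 < Min (insert 1 (d ` pairs))" using fin d(1) by (auto simp: Min_gr_iff)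
    fix i j x y assume "i \<in> I" "j \<in> I" "i \<noteq> j" "x \<in> P i" "y \<in> P j"
    then have "(i, j) \<in> pairs" "d (i, j) \<le> \<bar>x - y\<bar>"
      using d(2)[of "(i, j)"] by (auto simp: pairs_def dist_real_def)
    then show "Min (insert 1 (d ` pairs)) \<le> \<bar>x - y\<bar>"
      using fin by (meson Min_le image_eqI insertCI order_trans)
  qed
qed

lemma affine_cover_pullback:
  fixes B :: "real set" and \<U> :: "real set set"
  assumes s: "0 < s" and r: "r \<noteq> 0" and \<U>: "finite \<U>" "\<And>U. U \<in> \<U> \<Longrightarrow> bounded U"
    and cover: "(\<lambda>x. r*x + c) ` B \<subseteq> \<Union>\<U>"
  obtains \<V> where "finite \<V>" "card \<V> \<le> card \<U>" "\<And>V. V \<in> \<V> \<Longrightarrow> bounded V" "B \<subseteq> \<Union>\<V>"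
    "\<bar>r\<bar> powr s * (\<Sum>V\<in>\<V>. hweight s V) \<le> (\<Sum>U\<in>\<U>. hweight s U)"
proof
  define g where "g = (\<lambda>x. (1 / r) * x + (- c / r))"
  let ?\<V> = "(\<lambda>U. g ` U) ` \<U>"
  show "finite ?\<V>" "card ?\<V> \<le> card \<U>" using \<U>(1) by (simp_all add: card_image_le)
  show "bounded V" if "V \<in> ?\<V>" for V
    using that \<U>(2) bounded_affine_image unfolding g_def by blast
  show "B \<subseteq> \<Union>?\<V>"
  proof
    fix y assume "y \<in> B"
    then obtain U where "U \<in> \<U>" "r * y + c \<in> U" using cover by blast
    moreover have "y = g (r * y + c)" using r by (simp add: g_def field_simps)
    ultimately show "y \<in> \<Union>?\<V>" by blast
  qed
  have "(\<Sum>V\<in>?\<V>. hweight s V) \<le> \<bar>1 / r\<bar> powr s * (\<Sum>U\<in>\<U>. hweight s U)"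
    unfolding g_def using \<U> r s by (intro sum_hweight_affine_image_le) auto
  also have "\<dots> = (\<Sum>U\<in>\<U>. hweight s U) / \<bar>r\<bar> powr s"
    by (simp add: abs_divide powr_divide)
  finally show "\<bar>r\<bar> powr s * (\<Sum>V\<in>?\<V>. hweight s V) \<le> (\<Sum>U\<in>\<U>. hweight s U)"
    using r by (subst (asm) pos_le_divide_eq) (simp_all add: mult.commute)
qed

lemma finite_cover_weight_ge:
  fixes B :: "real set" and r c :: "'i \<Rightarrow> real" and \<U> :: "real set set"
  assumes s: "0 < s" and I: "finite I" and two: "\<exists>i\<in>I. \<exists>j\<in>I. i \<noteq> j"
    and r: "\<And>i. i \<in> I \<Longrightarrow> r i \<noteq> 0" and ratio_sum: "1 \<le> (\<Sum>i\<in>I. \<bar>r i\<bar> powr s)"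
    and B: "B \<noteq> {}" and copies: "\<And>i. i \<in> I \<Longrightarrow> (\<lambda>x. r i * x + c i) ` B \<subseteq> B"
    and \<delta>: "0 < \<delta>"
    and gap: "\<And>i j x y. i \<in> I \<Longrightarrow> j \<in> I \<Longrightarrow> i \<noteq> j \<Longrightarrow>
      x \<in> (\<lambda>x. r i * x + c i) ` B \<Longrightarrow> y \<in> (\<lambda>x. r j * x + c j) ` B \<Longrightarrow> \<delta> \<le> \<bar>x - y\<bar>"
    and \<U>: "finite \<U>" "\<And>U. U \<in> \<U> \<Longrightarrow> bounded U" "B \<subseteq> \<Union>\<U>"
  shows "\<delta> powr s \<le> (\<Sum>U\<in>\<U>. hweight s U)"
  using \<U>
proof (induction "card \<U>" arbitrary: \<U> rule: less_induct)
  case less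
  define P where "P i = (\<lambda>x. r i * x + c i) ` B" for i
  show ?case
  proof (cases "\<exists>U\<in>\<U>. \<delta> \<le> diameter U")
    case True
    then obtain U where U: "U \<in> \<U>" "\<delta> \<le> diameter U" by auto
    then have "U \<noteq> {}" using \<delta> by auto
    then have "\<delta> powr s \<le> hweight s U" using U s \<delta> by (simp add: hweight_def powr_mono2)
    also have "\<dots> \<le> (\<Sum>U\<in>\<U>. hweight s U)"
      by (rule member_le_sum[OF U(1) _ less.prems(1)]) (simp add: hweight_nonneg)
    finally show ?thesis .
  next
    case False
    have meets_one: "i = j"
      if U: "U \<in> \<U>" and ij: "i \<in> I" "j \<in> I" and meets: "U \<inter> P i \<noteq> {}" "U \<inter> P j \<noteq> {}" for U i j
    proof (rule ccontr)
      assume "i \<noteq> j"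
      obtain x y where "x \<in> U" "x \<in> P i" "y \<in> U" "y \<in> P j" using meets by blast
      then have "\<delta> \<le> \<bar>x - y\<bar>" "\<bar>x - y\<bar> \<le> diameter U"
        using gap[OF ij \<open>i \<noteq> j\<close>] diameter_bounded_bound[of U x y] less.prems(2) U
        by (auto simp: P_def dist_real_def)
      then show False using False U by force
    qed
    define Ui where "Ui i = {U\<in>\<U>. U \<inter> P i \<noteq> {}}" for i
    have Ui_finite: "finite (Ui i)" for i using less.prems(1) by (simp add: Ui_def)
    have Ui_disjoint: "Ui i \<inter> Ui j = {}" if "i \<in> I" "j \<in> I" "i \<noteq> j" for i j
      using meets_one[OF _ that(1,2)] that(3) unfolding Ui_def by blast
    have Ui_weight: "\<bar>r i\<bar> powr s * \<delta> powr s \<le> (\<Sum>U\<in>Ui i. hweight s U)" if i: "i \<in> I" for i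
    proof -
      have card: "card (Ui i) < card \<U>"
      proof -
        obtain j where j: "j \<in> I" "j \<noteq> i" using two i by metis
        obtain y where "y \<in> P j" using B by (auto simp: P_def)
        then obtain U where U: "U \<in> \<U>" "y \<in> U" using copies[OF j(1)] less.prems(3) by (auto simp: P_def)
        then have "U \<notin> Ui i" using meets_one[OF U(1) i j(1)] \<open>y \<in> P j\<close> j(2) by (auto simp: Ui_def)
        then have "Ui i \<subset> \<U>" using U by (auto simp: Ui_def)
        then show ?thesis using less.prems(1) by (rule psubset_card_mono[rotated])
      qed
      have cover: "(\<lambda>x. r i * x + c i) ` B \<subseteq> \<Union>(Ui i)"
      proof
        fix x assume x: "x \<in> (\<lambda>x. r i * x + c i) ` B"
        then obtain U where "U \<in> \<U>" "x \<in> U" using copies[OF i] less.prems(3) by blast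
        then show "x \<in> \<Union>(Ui i)" using x unfolding Ui_def P_def by blast
      qed
      have "\<And>U. U \<in> Ui i \<Longrightarrow> bounded U" using less.prems(2) by (simp add: Ui_def)
      then obtain \<V> where "finite \<V>" "card \<V> \<le> card (Ui i)" "\<And>V. V \<in> \<V> \<Longrightarrow> bounded V" "B \<subseteq> \<Union>\<V>"
        and weight: "\<bar>r i\<bar> powr s * (\<Sum>V\<in>\<V>. hweight s V) \<le> (\<Sum>U\<in>Ui i. hweight s U)"
        by (rule affine_cover_pullback[OF s r[OF i] Ui_finite _ cover]) auto
      moreover from this(2) have "card \<V> < card \<U>" using card by linarith
      ultimately have "\<delta> powr s \<le> (\<Sum>V\<in>\<V>. hweight s V)" by (intro less.hyps)
      then show ?thesis by (rule order_trans[OF mult_left_mono[OF _ powr_ge_zero] weight])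
    qed
    have "\<delta> powr s \<le> (\<Sum>i\<in>I. \<bar>r i\<bar> powr s) * \<delta> powr s"
      using ratio_sum by (simp add: mult_le_cancel_right1)
    also have "\<dots> \<le> (\<Sum>i\<in>I. \<Sum>U\<in>Ui i. hweight s U)"
      unfolding sum_distrib_right by (rule sum_mono) (rule Ui_weight)
    also have "\<dots> = (\<Sum>U\<in>(\<Union>i\<in>I. Ui i). hweight s U)"
      by (rule sum.UNION_disjoint[symmetric, OF I]) (simp_all add: Ui_finite Ui_disjoint)
    also have "\<dots> \<le> (\<Sum>U\<in>\<U>. hweight s U)"
      by (rule sum_mono2[OF less.prems(1)]) (auto simp: Ui_def hweight_nonneg)
    finally show ?thesis .
  qed
qed

lemma exists_pos_powr_add_le:
  fixes d s e :: real
  assumes "0 \<le> d" "0 < s" "0 < e"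
  obtains \<eta> where "0 < \<eta>" "(d + \<eta>) powr s \<le> d powr s + e"
proof -
  have "((\<lambda>\<eta>. (d + \<eta>) powr s) \<longlongrightarrow> (d + 0) powr s) (at_right 0)"
    using assms by (intro tendsto_intros) (auto intro: eventually_mono[OF eventually_at_right_less])
  then have "\<forall>\<^sub>F \<eta> in at_right 0. (d + \<eta>) powr s < d powr s + e"
    using assms by (intro order_tendstoD(2)) auto
  then obtain b where "0 < b" "\<And>\<eta>. 0 < \<eta> \<Longrightarrow> \<eta> < b \<Longrightarrow> (d + \<eta>) powr s < d powr s + e"
    by (auto simp: eventually_at_right_field)
  moreover have "0 < b / 2" "b / 2 < b" using \<open>0 < b\<close> by simp_all
  ultimately show ?thesis using that[of "b / 2"] by (simp add: less_imp_le)
qed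

lemma bounded_subset_open_weight:
  fixes U :: "real set"
  assumes "bounded U" "0 < s" "0 < e"
  obtains V where "open V" "U \<subseteq> V" "bounded V" "hweight s V \<le> 2 powr s * (hweight s U + e)"
proof (cases "U = {}")
  case True
  then show ?thesis using that[of "{}"] assms by (simp add: hweight_def)
next
  case False
  then obtain x where x: "x \<in> U" by auto
  obtain \<eta> where \<eta>: "0 < \<eta>" "(diameter U + \<eta>) powr s \<le> diameter U powr s + e"
    using exists_pos_powr_add_le[OF diameter_ge_0[OF assms(1)] assms(2,3)] by blast
  have "U \<subseteq> ball x (diameter U + \<eta>)"
    using diameter_bounded_bound[OF assms(1) x] \<eta>(1) by fastforce
  moreover have "hweight s (ball x (diameter U + \<eta>)) \<le> 2 powr s * (hweight s U + e)"
  proof -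
    have "0 < diameter U + \<eta>" using diameter_ge_0[OF assms(1)] \<eta>(1) by linarith
    then have "hweight s (ball x (diameter U + \<eta>)) = 2 powr s * (diameter U + \<eta>) powr s"
      using assms(2) by (simp add: hweight_def flip: powr_mult)
    also have "\<dots> \<le> 2 powr s * (hweight s U + e)"
      using \<eta>(2) False assms(2) by (simp add: hweight_def)
    finally show ?thesis .
  qed
  ultimately show ?thesis by (intro that[of "ball x (diameter U + \<eta>)"]) auto
qed

text \<open>Enlarge the \<open>i\<close>-th set to an open set of weight at most \<open>2\<^sup>s\<close> times its own plus
  \<open>e/2\<^sup>i\<^sup>+\<^sup>1\<close>, then pass to a finite subcover by compactness.\<close>
lemma countable_cover_weight_ge:
  fixes B :: "real set" and U :: "nat \<Rightarrow> real set"
  assumes finite_bound: "\<And>\<U>. finite \<U> \<Longrightarrow> (\<And>U. U \<in> \<U> \<Longrightarrow> bounded U) \<Longrightarrow> B \<subseteq> \<Union>\<U> \<Longrightarrow>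
      m \<le> (\<Sum>U\<in>\<U>. hweight s U)"
    and s: "0 < s" and B: "compact B" and cov: "B \<subseteq> (\<Union>i. U i)" and bdd: "\<And>i. bounded (U i)"
  shows "ennreal (m / 2 powr s) \<le> (\<Sum>i. ennreal (hweight s (U i)))"
proof (rule ennreal_le_epsilon)
  fix e :: real assume e: "0 < e"
  have "\<forall>i. \<exists>V. open V \<and> U i \<subseteq> V \<and> bounded V \<and> hweight s V \<le> 2 powr s * (hweight s (U i) + e / 2^Suc i)"
    using bounded_subset_open_weight[OF bdd s] e by (metis divide_pos_pos zero_less_power zero_less_numeral)
  then obtain V where V: "\<And>i. open (V i)" "\<And>i. U i \<subseteq> V i" "\<And>i. bounded (V i)"
    "\<And>i. hweight s (V i) \<le> 2 powr s * (hweight s (U i) + e / 2^Suc i)"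
    by metis
  obtain J where J: "finite J" "B \<subseteq> (\<Union>i\<in>J. V i)"
  proof (rule compactE_image[OF B, of UNIV V])
    show "open (V i)" for i by (rule V(1))
    show "B \<subseteq> (\<Union>i\<in>UNIV. V i)" using cov V(2) by blast
  qed (rule that)
  have geometric: "(\<Sum>i\<in>J. (1/2::real)^Suc i) \<le> 1"
    using sum_le_suminf[of "\<lambda>i. (1/2::real)^Suc i" J] power_half_series J(1) by (auto simp: sums_iff)
  have "m \<le> (\<Sum>W\<in>V ` J. hweight s W)"
    using finite_bound[of "V ` J"] J V(3) by auto
  also have "\<dots> \<le> (\<Sum>i\<in>J. hweight s (V i))"
    using sum_image_le[OF J(1), where g="hweight s" and f=V] by (simp add: hweight_nonneg o_def)
  also have "\<dots> \<le> (\<Sum>i\<in>J. 2 powr s * (hweight s (U i) + e * (1/2)^Suc i))"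
    using V(4) by (intro sum_mono) (simp add: power_one_over)
  also have "\<dots> = 2 powr s * ((\<Sum>i\<in>J. hweight s (U i)) + e * (\<Sum>i\<in>J. (1/2)^Suc i))"
    by (simp add: sum_distrib_left sum.distrib distrib_left)
  also have "\<dots> \<le> 2 powr s * ((\<Sum>i\<in>J. hweight s (U i)) + e)"
    using geometric e by (intro mult_left_mono add_left_mono) (auto simp: mult_left_le)
  finally have "m / 2 powr s \<le> (\<Sum>i\<in>J. hweight s (U i)) + e"
    by (simp add: divide_le_eq mult.commute)
  then have "ennreal (m / 2 powr s) \<le> ennreal ((\<Sum>i\<in>J. hweight s (U i)) + e)"
    by (rule ennreal_leI)
  also have "\<dots> = (\<Sum>i\<in>J. ennreal (hweight s (U i))) + ennreal e"
    using e by (simp add: hweight_nonneg sum_nonneg)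
  also have "\<dots> \<le> (\<Sum>i. ennreal (hweight s (U i))) + ennreal e"
    by (intro add_mono sum_le_suminf J(1)) auto
  finally show "ennreal (m / 2 powr s) \<le> (\<Sum>i. ennreal (hweight s (U i))) + ennreal e" .
qed

lemma hausdorff_measure_nonzero_if_similar_copies:
  fixes B :: "real set" and r c :: "'i \<Rightarrow> real"
  assumes s: "0 < s" and B: "compact B" "B \<noteq> {}"
    and I: "finite I" and two: "\<exists>i\<in>I. \<exists>j\<in>I. i \<noteq> j"
    and r: "\<And>i. i \<in> I \<Longrightarrow> r i \<noteq> 0" and ratio_sum: "1 \<le> (\<Sum>i\<in>I. \<bar>r i\<bar> powr s)"
    and copies: "\<And>i. i \<in> I \<Longrightarrow> (\<lambda>x. r i * x + c i) ` B \<subseteq> B"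
    and disjoint: "\<And>i j. i \<in> I \<Longrightarrow> j \<in> I \<Longrightarrow> i \<noteq> j \<Longrightarrow>
      (\<lambda>x. r i * x + c i) ` B \<inter> (\<lambda>x. r j * x + c j) ` B = {}"
  shows "hausdorff_measure s B \<noteq> 0"
proof -
  have "compact ((\<lambda>x. r i * x + c i) ` B)" for i
    using B(1) by (intro compact_continuous_image continuous_intros)
  then obtain \<delta> where \<delta>: "0 < \<delta>" and gap: "\<And>i j x y. i \<in> I \<Longrightarrow> j \<in> I \<Longrightarrow> i \<noteq> j \<Longrightarrow>
      x \<in> (\<lambda>x. r i * x + c i) ` B \<Longrightarrow> y \<in> (\<lambda>x. r j * x + c j) ` B \<Longrightarrow> \<delta> \<le> \<bar>x - y\<bar>"
    using finite_family_uniform_gap[of I "\<lambda>i. (\<lambda>x. r i * x + c i) ` B", OF I _ disjoint] by blast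
  have "ennreal (\<delta> powr s / 2 powr s) \<le> (\<Sum>i. ennreal (hweight s (U i)))"
    if "B \<subseteq> (\<Union>i. U i)" "\<forall>i. bounded (U i) \<and> diameter (U i) \<le> 1" for U
    using countable_cover_weight_ge[OF finite_cover_weight_ge[OF s I two r ratio_sum B(2) copies \<delta> gap]
        s B(1)] that by auto
  then have "ennreal (\<delta> powr s / 2 powr s) \<le> hausdorff_pre s 1 B"
    unfolding hausdorff_pre_def by (auto intro: INF_greatest)
  also have "\<dots> \<le> hausdorff_measure s B" by (rule hausdorff_measure_ge_pre) simp
  moreover have "0 < \<delta> powr s / 2 powr s" using \<delta> by simp
  ultimately show ?thesis by (metis ennreal_eq_0_iff le_zero_eq not_less)
qed

section \<open>Upper bounds for Hausdorff measure from finite covers\<close>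

text \<open>Finite covers are lists of sets, so that their weights are plain finite sums.\<close>
definition has_fin_cover :: "real \<Rightarrow> real \<Rightarrow> real set \<Rightarrow> real \<Rightarrow> bool" where
  "has_fin_cover s \<delta> X t \<longleftrightarrow> (\<exists>Us. X \<subseteq> \<Union>(set Us) \<and> (\<forall>U\<in>set Us. bounded U \<and> diameter U \<le> \<delta>)
     \<and> sum_list (map (hweight s) Us) \<le> t)"

lemma has_fin_cover_mono:
  "X \<subseteq> Y \<Longrightarrow> \<delta> \<le> \<delta>' \<Longrightarrow> t \<le> t' \<Longrightarrow> has_fin_cover s \<delta> Y t \<Longrightarrow> has_fin_cover s \<delta>' X t'"
  unfolding has_fin_cover_def by (meson order_trans)

lemma has_fin_cover_Un:
  assumes "has_fin_cover s \<delta> X a" "has_fin_cover s \<delta> Y b"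
  shows "has_fin_cover s \<delta> (X \<union> Y) (a + b)"
proof -
  obtain Us Vs where U: "X \<subseteq> \<Union>(set Us)" "\<forall>U\<in>set Us. bounded U \<and> diameter U \<le> \<delta>"
      "sum_list (map (hweight s) Us) \<le> a"
    and V: "Y \<subseteq> \<Union>(set Vs)" "\<forall>U\<in>set Vs. bounded U \<and> diameter U \<le> \<delta>"
      "sum_list (map (hweight s) Vs) \<le> b"
    using assms unfolding has_fin_cover_def by blast
  show ?thesis unfolding has_fin_cover_def
    by (rule exI[of _ "Us @ Vs"]) (use U V in auto)
qed

lemma has_fin_cover_UN:
  assumes "finite I" "\<And>i. i \<in> I \<Longrightarrow> has_fin_cover s \<delta> (X i) (t i)"
  shows "has_fin_cover s \<delta> (\<Union>i\<in>I. X i) (\<Sum>i\<in>I. t i)"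
  using assms
proof (induction rule: finite_induct)
  case empty
  show ?case unfolding has_fin_cover_def by (rule exI[of _ "[]"]) simp
next
  case (insert x F)
  then show ?case using has_fin_cover_Un[of s \<delta> "X x" "t x"] by simp
qed

lemma has_fin_cover_affine:
  assumes s: "0 < s" and a: "a \<noteq> 0" and X: "has_fin_cover s \<delta> X t"
  shows "has_fin_cover s (\<bar>a\<bar> * \<delta>) ((\<lambda>x. a*x+b) ` X) (\<bar>a\<bar> powr s * t)"
proof -
  define f where "f = (\<lambda>x::real. a*x+b)"
  obtain Us where U: "X \<subseteq> \<Union>(set Us)" "\<forall>U\<in>set Us. bounded U \<and> diameter U \<le> \<delta>"
      "sum_list (map (hweight s) Us) \<le> t"
    using X unfolding has_fin_cover_def by blast
  have "f ` X \<subseteq> \<Union>(set (map ((`) f) Us))" using U(1) by auto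
  moreover have "\<forall>V\<in>set (map ((`) f) Us). bounded V \<and> diameter V \<le> \<bar>a\<bar> * \<delta>"
    using U(2) a by (auto simp: f_def diameter_affine bounded_affine_image intro: mult_left_mono)
  moreover have "sum_list (map (hweight s) (map ((`) f) Us)) = \<bar>a\<bar> powr s * sum_list (map (hweight s) Us)"
    using U(2) a s by (simp add: f_def hweight_affine o_def sum_list_const_mult cong: map_cong)
  moreover have "\<bar>a\<bar> powr s * sum_list (map (hweight s) Us) \<le> \<bar>a\<bar> powr s * t"
    using U(3) by (simp add: mult_left_mono)
  ultimately show ?thesis unfolding has_fin_cover_def f_def by (metis order_refl)
qed

lemma has_fin_cover_unit_interval:
  assumes "0 < s"
  shows "has_fin_cover s (1/2^k) {0..1} ((2 * (1/2) powr s)^k)"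
proof (induction k)
  case 0
  show ?case unfolding has_fin_cover_def by (rule exI[of _ "[{0..1}]"]) (simp add: hweight_def)
next
  case (Suc k)
  let ?t = "(1/2) powr s * (2 * (1/2) powr s)^k"
  have "has_fin_cover s (1/2^Suc k) ((\<lambda>x. (1/2)*x+c) ` {0..1}) ?t" for c :: real
    using has_fin_cover_affine[OF assms _ Suc.IH, of "1/2" c] by simp
  then have "has_fin_cover s (1/2^Suc k) ((\<lambda>x. (1/2)*x+0) ` {0..1} \<union> (\<lambda>x. (1/2)*x+1/2) ` {0..1}) (?t + ?t)"
    by (intro has_fin_cover_Un)
  moreover have "{0..1} \<subseteq> (\<lambda>x. (1/2)*x+0) ` {0..1} \<union> (\<lambda>x::real. (1/2)*x+1/2) ` {0..1}"
  proof
    fix y :: real assume y: "y \<in> {0..1}"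
    have "y = (1/2)*(2*y)+0" "y = (1/2)*(2*y-1)+1/2" by (simp_all add: field_simps)
    then show "y \<in> (\<lambda>x. (1/2)*x+0) ` {0..1} \<union> (\<lambda>x::real. (1/2)*x+1/2) ` {0..1}"
      using y by (cases "y \<le> 1/2") (auto intro: image_eqI)
  qed
  ultimately show ?case by (rule has_fin_cover_mono[rotated 3]) (simp_all add: algebra_simps)
qed

lemma hausdorff_pre_le_if_has_fin_cover:
  assumes \<delta>: "0 < \<delta>" and X: "has_fin_cover s \<delta> X t"
  shows "hausdorff_pre s \<delta> X \<le> ennreal t"
proof -
  obtain Us where U: "X \<subseteq> \<Union>(set Us)" "\<forall>U\<in>set Us. bounded U \<and> diameter U \<le> \<delta>"
      "sum_list (map (hweight s) Us) \<le> t"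
    using X unfolding has_fin_cover_def by blast
  define W where "W i = (if i < length Us then Us!i else {})" for i
  have "X \<subseteq> (\<Union>i. W i)" using U(1) by (force simp: W_def in_set_conv_nth)
  moreover have "\<forall>i. bounded (W i) \<and> diameter (W i) \<le> \<delta>"
    using U(2) \<delta> by (auto simp: W_def less_imp_le)
  ultimately have "hausdorff_pre s \<delta> X \<le> (\<Sum>i. ennreal (hweight s (W i)))"
    unfolding hausdorff_pre_def by (auto intro: INF_lower)
  also have "\<dots> = (\<Sum>i<length Us. ennreal (hweight s (W i)))"
    by (rule suminf_finite) (auto simp: W_def hweight_def)
  also have "\<dots> = ennreal (sum_list (map (hweight s) Us))"
    by (simp add: W_def hweight_nonneg sum_list_sum_nth atLeast0LessThan)
  also have "\<dots> \<le> ennreal t" using U(3) by (rule ennreal_leI)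
  finally show ?thesis .
qed

lemma hausdorff_measure_eq_0_if_small_covers:
  assumes "\<And>\<delta> e. 0 < \<delta> \<Longrightarrow> 0 < e \<Longrightarrow> \<exists>t\<le>e. has_fin_cover s \<delta> X t"
  shows "hausdorff_measure s X = 0"
proof -
  have "hausdorff_pre s \<delta> X \<le> 0" if \<delta>: "0 < \<delta>" for \<delta>
  proof (rule ennreal_le_epsilon)
    fix e :: real assume "0 < e"
    then obtain t where "t \<le> e" "has_fin_cover s \<delta> X t" using assms \<delta> by blast
    then show "hausdorff_pre s \<delta> X \<le> 0 + ennreal e"
      using hausdorff_pre_le_if_has_fin_cover[OF \<delta>] ennreal_leI order_trans by fastforce
  qed
  then show ?thesis unfolding hausdorff_measure_def by simp
qed

lemma hausdorff_dim_eqI: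
  assumes "0 \<le> d"
    and above: "\<And>s. d < s \<Longrightarrow> hausdorff_measure s E = 0"
    and below: "\<And>s. 0 \<le> s \<Longrightarrow> s < d \<Longrightarrow> hausdorff_measure s E \<noteq> 0"
  shows "hausdorff_dim E = d"
proof -
  define Z where "Z = {s. 0 \<le> s \<and> hausdorff_measure s E = 0}"
  have Z_ge: "d \<le> s" if "s \<in> Z" for s
    using below[of s] that by (force simp: Z_def)
  have Z_gt: "s \<in> Z" if "d < s" for s
    using above[OF that] that assms(1) by (simp add: Z_def)
  have "Inf Z \<le> d"
  proof (rule field_le_epsilon)
    fix e :: real assume "0 < e"
    then show "Inf Z \<le> d + e"
      using Z_gt[of "d + e"] Z_ge by (intro cInf_lower) (auto intro: bdd_belowI[of Z d])
  qed
  moreover have "d \<le> Inf Z"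
    using Z_gt[of "d + 1"] Z_ge by (intro cInf_greatest) auto
  ultimately show ?thesis unfolding hausdorff_dim_def Z_def by simp
qed

section \<open>The attractor\<close>

definition hutchinson :: "real \<Rightarrow> real \<Rightarrow> real set \<Rightarrow> real set" where
  "hutchinson p q X = S1 p ` X \<union> S2 q ` X \<union> S3 p ` X \<union> S4 q ` X"

lemma hutchinson_mono: "X \<subseteq> Y \<Longrightarrow> hutchinson p q X \<subseteq> hutchinson p q Y"
  unfolding hutchinson_def by auto

text \<open>The summands \<open>+0\<close> put all four maps in the common form \<open>y \<mapsto> r y + c\<close>.\<close>
lemma hutchinson_eq_affine_images:
  "hutchinson p q X = (\<lambda>y. p*y+0) ` X \<union> (\<lambda>y. q*y+0) ` X \<union> (\<lambda>y. p*y+(1-p)) ` X \<union> (\<lambda>y. q*y+(1-q)) ` X"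
  unfolding hutchinson_def S1_def S2_def S3_def S4_def by (simp add: add_diff_eq)

lemma hutchinson_reflect: "(\<lambda>x. 1-x) ` hutchinson p q X = hutchinson p q ((\<lambda>x. 1-x) ` X)"
proof -
  have reflect: "(\<lambda>x. 1-x) ` ((\<lambda>y. r*y+c) ` X) = (\<lambda>y. r*y+(1-r-c)) ` ((\<lambda>x. 1-x) ` X)" for r c :: real
    unfolding image_image by (rule image_cong) (auto simp: algebra_simps)
  show ?thesis unfolding hutchinson_eq_affine_images image_Un reflect by (simp add: Un_ac)
qed

locale contraction_pair =
  fixes p q :: real
  assumes p: "0 < p" "p < 1/2" and q: "0 < q" "q < 1/2"
begin

lemma hutchinson_memE:
  assumes "x \<in> hutchinson p q X"
  obtains r c y where "0 < r" "r < 1/2" "y \<in> X" "x = r*y+c"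
    "\<And>Y. (\<lambda>z. r*z+c) ` Y \<subseteq> hutchinson p q Y"
  using assms p q unfolding hutchinson_eq_affine_images by (elim UnE imageE) (fastforce+)

lemma hutchinson_mem_iff:
  "x \<in> hutchinson p q Y \<longleftrightarrow> x/p \<in> Y \<or> x/q \<in> Y \<or> (x-(1-p))/p \<in> Y \<or> (x-(1-q))/q \<in> Y"
proof -
  have mem: "x \<in> (\<lambda>y. r*y+c) ` Y \<longleftrightarrow> (x-c)/r \<in> Y" if "r \<noteq> 0" for r c
    using that by (auto simp: image_iff field_simps intro!: bexI[of _ "(x-c)/r"])
  show ?thesis
    using mem[of p 0] mem[of q 0] mem[of p "1-p"] mem[of q "1-q"] p q
    unfolding hutchinson_eq_affine_images by auto
qed

lemma hutchinson_INT:
  assumes dec: "decseq X" and x: "\<And>n. x \<in> hutchinson p q (X n)"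
  shows "x \<in> hutchinson p q (\<Inter>n. X n)"
proof (rule ccontr)
  assume "x \<notin> hutchinson p q (\<Inter>n. X n)"
  then obtain n1 n2 n3 n4 where "x/p \<notin> X n1" "x/q \<notin> X n2" "(x-(1-p))/p \<notin> X n3" "(x-(1-q))/q \<notin> X n4"
    unfolding hutchinson_mem_iff by blast
  moreover have "X (n1+n2+n3+n4) \<subseteq> X k" if "k \<in> {n1, n2, n3, n4}" for k
    using decseqD[OF dec, of k "n1+n2+n3+n4"] that by auto
  ultimately show False using x[of "n1+n2+n3+n4"] unfolding hutchinson_mem_iff by blast
qed

lemma hutchinson_unit_interval: "hutchinson p q {0..1} \<subseteq> {0..1}"
proof
  fix x assume "x \<in> hutchinson p q {0..1}"
  then consider y where "y \<in> {0..1}" "x = p*y" | y where "y \<in> {0..1}" "x = q*y"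
    | y where "y \<in> {0..1}" "x = p*y+(1-p)" | y where "y \<in> {0..1}" "x = q*y+(1-q)"
    unfolding hutchinson_eq_affine_images by auto
  then show "x \<in> {0..1}"
    by cases (use p q in \<open>auto intro: mult_le_one simp: mult_left_le\<close>)
qed

lemma compact_hutchinson: "compact X \<Longrightarrow> compact (hutchinson p q X)"
  unfolding hutchinson_eq_affine_images
  by (intro compact_Un compact_continuous_image continuous_intros) auto

text \<open>Each map contracts by a factor below 1/2, so fixed points attract each other.\<close>
lemma hutchinson_fixed_subset:
  assumes X: "hutchinson p q X = X" "compact X" and Y: "hutchinson p q Y = Y" "compact Y" "Y \<noteq> {}"
  shows "X \<subseteq> Y"
proof -
  obtain R1 R2 where "\<forall>x\<in>X. \<bar>x\<bar> \<le> R1" "\<forall>y\<in>Y. \<bar>y\<bar> \<le> R2"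
    using compact_imp_bounded[OF X(2)] compact_imp_bounded[OF Y(2)] by (auto simp: bounded_iff)
  then obtain R where R: "\<And>x y. x \<in> X \<Longrightarrow> y \<in> Y \<Longrightarrow> \<bar>x - y\<bar> \<le> R"
    by (meson abs_triangle_ineq4 add_mono order_trans)
  have close: "\<forall>x\<in>X. \<exists>y\<in>Y. \<bar>x - y\<bar> \<le> R / 2^n" for n
  proof (induction n)
    case 0
    show ?case using R Y(3) by auto
  next
    case (Suc n)
    show ?case
    proof
      fix x assume "x \<in> X"
      then obtain r c x' where r: "0 < r" "r < 1/2" and x': "x' \<in> X" "x = r*x'+c"
        and maps: "\<And>Y. (\<lambda>z. r*z+c) ` Y \<subseteq> hutchinson p q Y"
        using X(1) by (metis hutchinson_memE)
      obtain y' where y': "y' \<in> Y" "\<bar>x' - y'\<bar> \<le> R / 2^n" using Suc x' by blast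
      have "r*y'+c \<in> Y" using maps[of Y] Y(1) y'(1) by blast
      moreover have "x - (r*y'+c) = r * (x' - y')" using x' by (simp add: algebra_simps)
      then have "\<bar>x - (r*y'+c)\<bar> = r * \<bar>x' - y'\<bar>" using r by (simp add: abs_mult)
      moreover have "r * \<bar>x' - y'\<bar> \<le> (1/2) * (R / 2^n)"
        using r y' by (intro mult_mono) auto
      ultimately show "\<exists>y\<in>Y. \<bar>x - y\<bar> \<le> R / 2^Suc n" by (auto intro!: bexI[of _ "r*y'+c"])
    qed
  qed
  show ?thesis
  proof
    fix x assume x: "x \<in> X"
    have "\<exists>y\<in>Y. dist y x < e" if e: "e > 0" for e
    proof -
      obtain n where "R / e < 2^n" using real_arch_pow[of 2 "R / e"] by auto
      then have "R / 2^n < e" using e by (simp add: field_simps)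
      then show ?thesis using close[of n] x by (force simp: dist_real_def)
    qed
    then show "x \<in> Y" using closed_approachable compact_imp_closed[OF Y(2)] by blast
  qed
qed

lemma hutchinson_fixed_point_exists:
  "\<exists>K. compact K \<and> K \<noteq> {} \<and> hutchinson p q K = K \<and> K \<subseteq> {0..1}"
proof -
  define X where "X n = (hutchinson p q ^^ n) {0..1}" for n
  have X_Suc: "X (Suc n) = hutchinson p q (X n)" for n by (simp add: X_def)
  have dec: "decseq X"
  proof (rule decseq_SucI)
    show "X (Suc n) \<subseteq> X n" for n
      by (induction n) (simp_all add: X_def hutchinson_unit_interval hutchinson_mono)
  qed
  have compact: "compact (X n)" for n
    by (induction n) (simp_all add: X_def compact_hutchinson)
  have zero: "0 \<in> X n" for n
    by (induction n) (auto simp: X_def hutchinson_def S1_def)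
  have "hutchinson p q (\<Inter>n. X n) = (\<Inter>n. X n)"
  proof
    show "hutchinson p q (\<Inter>n. X n) \<subseteq> (\<Inter>n. X n)"
    proof (rule INT_greatest)
      fix n
      have "hutchinson p q (\<Inter>n. X n) \<subseteq> X (Suc n)"
        unfolding X_Suc by (intro hutchinson_mono INT_lower) simp
      also have "\<dots> \<subseteq> X n" using decseqD[OF dec, of n "Suc n"] by simp
      finally show "hutchinson p q (\<Inter>n. X n) \<subseteq> X n" .
    qed
    show "(\<Inter>n. X n) \<subseteq> hutchinson p q (\<Inter>n. X n)"
    proof
      fix x assume "x \<in> (\<Inter>n. X n)"
      then have "x \<in> hutchinson p q (X n)" for n using X_Suc[of n] by blast
      then show "x \<in> hutchinson p q (\<Inter>n. X n)" by (rule hutchinson_INT[OF dec])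
    qed
  qed
  moreover have "(\<Inter>n. X n) \<subseteq> {0..1}" using INT_lower[of 0 UNIV X] by (simp add: X_def)
  moreover have "compact (\<Inter>n. X n)" using compact by (intro compact_Inter) auto
  moreover have "(\<Inter>n. X n) \<noteq> {}" using zero by blast
  ultimately show ?thesis by blast
qed

lemma Kpq_attractor: "compact (Kpq p q)" "Kpq p q \<noteq> {}" "hutchinson p q (Kpq p q) = Kpq p q" "Kpq p q \<subseteq> {0..1}"
proof -
  obtain K where K: "compact K" "K \<noteq> {}" "hutchinson p q K = K" "K \<subseteq> {0..1}"
    using hutchinson_fixed_point_exists by blast
  have "Kpq p q = K"
    unfolding Kpq_def hutchinson_def[symmetric]
  proof (rule the_equality)
    show "compact K \<and> K \<noteq> {} \<and> K = hutchinson p q K" using K by simp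
    fix K' assume "compact K' \<and> K' \<noteq> {} \<and> K' = hutchinson p q K'"
    then show "K' = K"
      using hutchinson_fixed_subset[of K' K] hutchinson_fixed_subset[of K K'] K by auto
  qed
  with K show "compact (Kpq p q)" "Kpq p q \<noteq> {}" "hutchinson p q (Kpq p q) = Kpq p q" "Kpq p q \<subseteq> {0..1}"
    by simp_all
qed

end

context contraction_pair
begin

abbreviation K where "K \<equiv> Kpq p q"
abbreviation A where "A \<equiv> Apq p q"
definition B :: "real set" where "B = (\<lambda>x. p*x) ` K \<union> (\<lambda>x. q*x) ` K"

lemma K_eq_A_Un_B: "K = A \<union> B"
proof -
  have "K = hutchinson p q K" using Kpq_attractor by simp
  also have "\<dots> = A \<union> B" unfolding hutchinson_def Apq_def B_def S1_def S2_def by (simp add: Un_ac)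
  finally show ?thesis .
qed

lemma reflect_K: "(\<lambda>x. 1-x) ` K = K"
proof -
  have "compact ((\<lambda>x. 1-x) ` K)"
    using Kpq_attractor by (intro compact_continuous_image continuous_intros) auto
  moreover have "hutchinson p q ((\<lambda>x. 1-x) ` K) = (\<lambda>x. 1-x) ` K"
    using hutchinson_reflect[of p q K] Kpq_attractor by simp
  ultimately show ?thesis
    using hutchinson_fixed_subset Kpq_attractor by (metis image_is_empty subset_antisym)
qed

lemma A_eq_reflect_B: "A = (\<lambda>x. 1-x) ` B"
proof -
  have "(\<lambda>x. 1-x) ` B = (\<lambda>x. p*x+1-p) ` ((\<lambda>x. 1-x) ` K) \<union> (\<lambda>x. q*x+1-q) ` ((\<lambda>x. 1-x) ` K)"
    unfolding B_def image_Un image_image by (intro arg_cong2[where f="(\<union>)"] image_cong) (auto simp: algebra_simps)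
  then show ?thesis unfolding reflect_K Apq_def S3_def S4_def by simp
qed

lemma A_subset_K: "A \<subseteq> K" and B_subset_K: "B \<subseteq> K"
  using K_eq_A_Un_B by blast+

lemma scale_mem_K: "y \<in> K \<Longrightarrow> p*y \<in> K" "y \<in> K \<Longrightarrow> q*y \<in> K"
  using B_subset_K by (auto simp: B_def)

lemma K_memE:
  assumes "y \<in> K"
  obtains "y \<in> A" | z where "z \<in> K" "y = p*z" | z where "z \<in> K" "y = q*z"
  using assms K_eq_A_Un_B unfolding B_def by blast

lemma B_subset: "B \<subseteq> {0..max p q}"
proof
  fix x assume "x \<in> B"
  then obtain r y where r: "0 < r" "r \<le> max p q" and y: "y \<in> K" "x = r*y"
    using p q by (auto simp: B_def)
  then have "0 \<le> y" "y \<le> 1" using Kpq_attractor(4) by auto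
  moreover have "r * y \<le> r" "0 \<le> r * y" using mult_left_le[of y r] \<open>0 \<le> y\<close> \<open>y \<le> 1\<close> r(1) by simp_all
  ultimately have "0 \<le> x" "x \<le> max p q" using r(2) y(2) by linarith+
  then show "x \<in> {0..max p q}" by simp
qed

lemma A_subset: "A \<subseteq> {1 - max p q..1}"
  using B_subset unfolding A_eq_reflect_B by auto

lemma compact_B: "compact B"
  unfolding B_def using Kpq_attractor by (intro compact_Un compact_continuous_image continuous_intros) auto

lemma A_nonempty: "A \<noteq> {}"
  using Kpq_attractor(2) unfolding A_eq_reflect_B B_def by auto

lemma scale_pow_mem_K: "y \<in> K \<Longrightarrow> p^m * q^n * y \<in> K"
proof (induction m)
  case 0
  then show ?case by (induction n) (auto simp: mult.assoc dest: scale_mem_K(2))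
next
  case (Suc m)
  then show ?case using scale_mem_K(1) by (simp add: mult.assoc)
qed

lemma scale_pow_mem_B:
  assumes "y \<in> K" "(m, n) \<noteq> (0, 0)"
  shows "p^m * q^n * y \<in> B"
proof (cases m)
  case 0
  then obtain n' where "n = Suc n'" using assms(2) by (cases n) auto
  then have "p^m * q^n * y = q * (p^0 * q^n' * y)" using 0 by simp
  then show ?thesis using scale_pow_mem_K[OF assms(1)] unfolding B_def by blast
next
  case (Suc m')
  then have "p^m * q^n * y = p * (p^m' * q^n * y)" by (simp add: mult.assoc)
  then show ?thesis using scale_pow_mem_K[OF assms(1)] unfolding B_def by blast
qed

lemma B_decomposition:
  assumes "1 \<le> N" "x \<in> B"
  shows "(\<exists>m n. 0 < m+n \<and> m+n < N \<and> x \<in> (\<lambda>y. p^m*q^n*y) ` A)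
    \<or> (\<exists>m n. m+n = N \<and> x \<in> (\<lambda>y. p^m*q^n*y) ` K)"
  using assms(1)
proof (induction N rule: dec_induct)
  case base
  from assms(2) obtain y where "y \<in> K" "x = p*y \<or> x = q*y" unfolding B_def by auto
  then have "x \<in> (\<lambda>y. p^1*q^0*y) ` K \<or> x \<in> (\<lambda>y. p^0*q^1*y) ` K" by auto
  then show ?case by (metis add.commute add_0 one_add_one)
next
  case (step N)
  from step.IH show ?case
  proof
    assume "\<exists>m n. 0 < m+n \<and> m+n < N \<and> x \<in> (\<lambda>y. p^m*q^n*y) ` A"
    then show ?case by (metis less_SucI)
  next
    assume "\<exists>m n. m+n = N \<and> x \<in> (\<lambda>y. p^m*q^n*y) ` K"
    then obtain m n y where mn: "m+n = N" "y \<in> K" "x = p^m*q^n*y" by auto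
    from mn(2) show ?case
    proof (cases rule: K_memE)
      case 1
      then have "x \<in> (\<lambda>y. p^m*q^n*y) ` A" using mn by auto
      moreover have "0 < m+n" "m+n < Suc N" using mn(1) step.hyps by auto
      ultimately show ?thesis by blast
    next
      case (2 z)
      then have "x \<in> (\<lambda>y. p^Suc m*q^n*y) ` K" using mn by auto
      then show ?thesis using mn(1) by (metis add_Suc)
    next
      case (3 z)
      then have "x \<in> (\<lambda>y. p^m*q^Suc n*y) ` K" using mn by auto
      then show ?thesis using mn(1) by (metis add_Suc_right)
    qed
  qed
qed

lemma A_scale_pow_eq:
  assumes "a \<in> A" "a' \<in> A" "p^m*q^n*a = a'"
  shows "m = 0 \<and> n = 0"
proof (rule ccontr)
  assume "\<not> (m = 0 \<and> n = 0)"
  then have "1 \<le> m + n" by arith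
  have "p^m*q^n \<le> max p q ^ m * max p q ^ n"
    using p q by (intro mult_mono power_mono) auto
  also have "\<dots> \<le> max p q ^ 1"
    unfolding power_add[symmetric] using p q \<open>1 \<le> m + n\<close> by (intro power_decreasing) auto
  finally have "p^m*q^n \<le> max p q" by simp
  moreover have "0 \<le> a" "a \<le> 1" "1 - max p q \<le> a'"
    using assms(1,2) A_subset A_subset_K Kpq_attractor(4) by auto
  ultimately have "a' \<le> max p q"
    using assms(3) mult_left_le[of a "p^m*q^n"] p q by auto
  then show False using \<open>1 - max p q \<le> a'\<close> p q by linarith
qed

end

lemma sum_power_le_geometric:
  fixes a :: real
  assumes "0 \<le> a" "a < 1"
  shows "(\<Sum>i<N. a^i) \<le> 1 / (1 - a)"
proof -
  have "(\<Sum>i<N. a^i) \<le> (\<Sum>i. a^i)"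
    using assms by (intro sum_le_suminf summable_geometric) auto
  then show ?thesis using assms by (simp add: suminf_geometric)
qed

lemma finite_pairs_sum_less: "finite {(m, n). 0 < m+n \<and> m+n < (N::nat)}"
  by (rule finite_subset[of _ "{..<N} \<times> {..<N}"]) auto

lemma finite_pairs_sum_eq: "finite {(m, n). m+n = (N::nat)}"
  by (rule finite_subset[of _ "{..N} \<times> {..N}"]) auto

lemma sum_pairs_sum_less_le:
  fixes a b :: real
  assumes "0 \<le> a" "a < 1" "0 \<le> b" "b < 1" "1 \<le> N"
  shows "(\<Sum>(m, n)\<in>{(m, n). 0 < m+n \<and> m+n < N}. a^m*b^n) \<le> 1 / ((1-a)*(1-b)) - 1"
proof -
  have "(\<Sum>(m, n)\<in>{(m, n). 0 < m+n \<and> m+n < N}. a^m*b^n) \<le> (\<Sum>(m, n)\<in>{..<N}\<times>{..<N} - {(0, 0)}. a^m*b^n)"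
    by (rule sum_mono2) (use assms in auto)
  also have "\<dots> = (\<Sum>m<N. a^m) * (\<Sum>n<N. b^n) - 1"
    using assms(5) by (simp add: sum_diff1 sum_product sum.cartesian_product)
  also have "\<dots> \<le> 1/(1-a) * (1/(1-b)) - 1"
    using assms by (intro diff_right_mono mult_mono sum_power_le_geometric) (auto intro: sum_nonneg)
  finally show ?thesis by simp
qed

lemma sum_pairs_sum_eq_le:
  fixes a b \<rho> :: real
  assumes "0 \<le> a" "a \<le> \<rho>" "0 \<le> b" "b \<le> \<rho>"
  shows "(\<Sum>(m, n)\<in>{(m, n). m+n = N}. a^m*b^n) \<le> (real N + 1) * \<rho>^N"
proof -
  have "{(m, n). m+n = N} = (\<lambda>m. (m, N-m)) ` {..N}" by (auto simp: image_iff)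
  then have "(\<Sum>(m, n)\<in>{(m, n). m+n = N}. a^m*b^n) = (\<Sum>m\<le>N. a^m*b^(N-m))"
    by (simp add: sum.reindex inj_on_def)
  also have "\<dots> \<le> (\<Sum>m\<le>N. \<rho>^m*\<rho>^(N-m))"
    using assms by (intro sum_mono mult_mono power_mono) auto
  also have "\<dots> = (real N + 1) * \<rho>^N" by (simp flip: power_add)
  finally show ?thesis .
qed

lemma tendsto_Suc_times_power_zero:
  fixes \<rho> :: real
  assumes "0 \<le> \<rho>" "\<rho> < 1"
  shows "(\<lambda>N. (real N + 1) * \<rho>^N) \<longlonglongrightarrow> 0"
proof -
  have "(\<lambda>N. of_nat N * \<rho>^N + \<rho>^N) \<longlonglongrightarrow> 0 + 0"
    using assms by (intro tendsto_add powser_times_n_limit_0 LIMSEQ_power_zero) auto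
  then show ?thesis by (simp add: algebra_simps)
qed

lemma powr_power_base: "0 < x \<Longrightarrow> (x^m) powr s = (x powr s)^m" for x :: real
  by (induction m) (auto simp: powr_mult)

context contraction_pair
begin

lemma funpow_S1: "S1 p ^^ m = (\<lambda>x. p^m*x)" and funpow_S2: "S2 q ^^ m = (\<lambda>x. q^m*x)"
  by (induction m) (auto simp: S1_def S2_def)

lemma twofold_pow_eq:
  assumes tf: "twofold_cantor p q" and a: "a \<in> A" "a' \<in> A" and eq: "p^m*a = q^n*a'"
  shows "m = 0 \<and> n = 0"
proof (cases "m = 0 \<or> n = 0")
  case True
  then show ?thesis
    using A_scale_pow_eq[OF a(2,1), of 0 n] A_scale_pow_eq[OF a, of m 0] eq by auto
next
  case False
  have "p^m*a \<in> (S1 p ^^ m) ` A" unfolding funpow_S1 using a(1) by (rule imageI)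
  moreover have "p^m*a \<in> (S2 q ^^ n) ` A" unfolding funpow_S2 eq using a(2) by (rule imageI)
  moreover have "(S1 p ^^ m) ` A \<inter> (S2 q ^^ n) ` A = {}"
    using tf False unfolding twofold_cantor_def by simp
  ultimately show ?thesis by blast
qed

text \<open>Cancelling common factors leaves one of the situations excluded by \<open>A_scale_pow_eq\<close>
  and \<open>twofold_pow_eq\<close>.\<close>
lemma twofold_scaled_A_disjoint:
  assumes tf: "twofold_cantor p q" and a: "a \<in> A" "a' \<in> A" and eq: "p^i*q^j*a = p^k*q^l*a'"
  shows "i = k \<and> j = l"
proof -
  have cancel: "p^g*q^h*x = p^g*q^h*y \<longleftrightarrow> x = y" for g h and x y :: real
    using p q by simp
  consider "i \<le> k" "j \<le> l" | "i \<le> k" "l < j" | "k < i" "j \<le> l" | "k < i" "l < j" by linarith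
  then show ?thesis
  proof cases
    case 1
    then obtain e f where uv: "k = i+e" "l = j+f" by (metis le_add_diff_inverse)
    then have "p^i*q^j*a = p^i*q^j*(p^e*q^f*a')" using eq by (simp add: power_add algebra_simps)
    then have "p^e*q^f*a' = a" unfolding cancel by simp
    then show ?thesis using A_scale_pow_eq[OF a(2,1)] uv by simp
  next
    case 2
    then obtain e f where uv: "k = i+e" "j = l+f" by (metis le_add_diff_inverse less_imp_le)
    then have "p^i*q^l*(q^f*a) = p^i*q^l*(p^e*a')" using eq by (simp add: power_add algebra_simps)
    then have "p^e*a' = q^f*a" unfolding cancel by simp
    then show ?thesis using twofold_pow_eq[OF tf a(2,1), of e f] uv 2 by simp
  next
    case 3
    then obtain e f where uv: "i = k+e" "l = j+f" by (metis le_add_diff_inverse less_imp_le)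
    then have "p^k*q^j*(p^e*a) = p^k*q^j*(q^f*a')" using eq by (simp add: power_add algebra_simps)
    then have "p^e*a = q^f*a'" unfolding cancel by simp
    then show ?thesis using twofold_pow_eq[OF tf a, of e f] uv 3 by simp
  next
    case 4
    then obtain e f where uv: "i = k+e" "j = l+f" by (metis le_add_diff_inverse less_imp_le)
    then have "p^k*q^l*(p^e*q^f*a) = p^k*q^l*a'" using eq by (simp add: power_add algebra_simps)
    then have "p^e*q^f*a = a'" unfolding cancel by simp
    then show ?thesis using A_scale_pow_eq[OF a] uv by simp
  qed
qed

end

section \<open>The Hausdorff measure of the attractor\<close>

context contraction_pair
begin

lemma powr_p_q_bounds:
  assumes "0 < s"
  shows "0 < p powr s" "p powr s < 1" "0 < q powr s" "q powr s < 1"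
  using powr_less_mono2[OF assms, of p 1] powr_less_mono2[OF assms, of q 1] p q by simp_all

lemma has_fin_cover_scale_pow:
  assumes s: "0 < s" and \<delta>: "0 < \<delta>" and X: "has_fin_cover s \<delta> X t"
  shows "has_fin_cover s \<delta> ((\<lambda>y. p^m*q^n*y) ` X) ((p powr s)^m * (q powr s)^n * t)"
proof -
  have r: "0 < p^m*q^n" "p^m*q^n \<le> 1" using p q by (simp, intro mult_le_one power_le_one) auto
  have "has_fin_cover s (\<bar>p^m*q^n\<bar> * \<delta>) ((\<lambda>y. p^m*q^n*y+0) ` X) (\<bar>p^m*q^n\<bar> powr s * t)"
    by (intro has_fin_cover_affine[OF s _ X]) (use r(1) in linarith)
  moreover have "\<bar>p^m*q^n\<bar> powr s = (p powr s)^m * (q powr s)^n"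
    using p q by (simp add: powr_mult powr_power_base)
  moreover have "\<bar>p^m*q^n\<bar> * \<delta> \<le> \<delta>" using r \<delta> by (simp add: mult_left_le_one_le)
  ultimately show ?thesis by (auto elim: has_fin_cover_mono[rotated 3])
qed

lemma has_fin_cover_A_K:
  assumes "0 < s" "has_fin_cover s \<delta> B t"
  shows "has_fin_cover s \<delta> A t" "has_fin_cover s \<delta> K (t + t)"
proof -
  have "(\<lambda>x::real. (-1)*x+1) ` B = A" unfolding A_eq_reflect_B by simp
  then show A: "has_fin_cover s \<delta> A t"
    using has_fin_cover_affine[OF assms(1) _ assms(2), of "-1" 1] by simp
  show "has_fin_cover s \<delta> K (t + t)"
    using has_fin_cover_Un[OF A assms(2)] K_eq_A_Un_B by simp
qed

definition cover_factor :: "real \<Rightarrow> nat \<Rightarrow> real" where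
  "cover_factor s N = (\<Sum>(m, n)\<in>{(m, n). 0 < m+n \<and> m+n < N}. (p powr s)^m * (q powr s)^n)
     + 2 * (\<Sum>(m, n)\<in>{(m, n). m+n = N}. (p powr s)^m * (q powr s)^n)"

text \<open>Cover \<open>B\<close> by the copies \<open>p\<^sup>m q\<^sup>n A\<close> (\<open>0 < m + n < N\<close>) and \<open>p\<^sup>m q\<^sup>n K\<close>
  (\<open>m + n = N\<close>); a cover of \<open>B\<close> yields covers of \<open>A = 1 - B\<close> and \<open>K = A \<union> B\<close> of the same and
  of twice its weight.\<close>
lemma has_fin_cover_B_step:
  assumes s: "0 < s" and \<delta>: "0 < \<delta>" and N: "1 \<le> N" and B: "has_fin_cover s \<delta> B t"
  shows "has_fin_cover s \<delta> B (cover_factor s N * t)"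
proof -
  define w where "w m n = (p powr s)^m * (q powr s)^n" for m n
  define J1 where "J1 = {(m, n). 0 < m+n \<and> m+n < N}"
  define J2 where "J2 = {(m::nat, n::nat). m+n = N}"
  note scale = has_fin_cover_scale_pow[OF s \<delta>, folded w_def]
  have "has_fin_cover s \<delta> (\<Union>(m, n)\<in>J1. (\<lambda>y. p^m*q^n*y) ` A) (\<Sum>(m, n)\<in>J1. w m n * t)"
    using scale[OF has_fin_cover_A_K(1)[OF s B]] finite_pairs_sum_less[of N]
    unfolding J1_def by (intro has_fin_cover_UN) auto
  moreover have "has_fin_cover s \<delta> (\<Union>(m, n)\<in>J2. (\<lambda>y. p^m*q^n*y) ` K) (\<Sum>(m, n)\<in>J2. w m n * (t + t))"
    using scale[OF has_fin_cover_A_K(2)[OF s B]] finite_pairs_sum_eq[of N]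
    unfolding J2_def by (intro has_fin_cover_UN) auto
  ultimately have cover: "has_fin_cover s \<delta> ((\<Union>(m, n)\<in>J1. (\<lambda>y. p^m*q^n*y) ` A) \<union> (\<Union>(m, n)\<in>J2. (\<lambda>y. p^m*q^n*y) ` K))
      ((\<Sum>(m, n)\<in>J1. w m n * t) + (\<Sum>(m, n)\<in>J2. w m n * (t + t)))"
    by (rule has_fin_cover_Un)
  have sub: "B \<subseteq> (\<Union>(m, n)\<in>J1. (\<lambda>y. p^m*q^n*y) ` A) \<union> (\<Union>(m, n)\<in>J2. (\<lambda>y. p^m*q^n*y) ` K)"
  proof
    fix x assume "x \<in> B"
    from B_decomposition[OF N this]
    show "x \<in> (\<Union>(m, n)\<in>J1. (\<lambda>y. p^m*q^n*y) ` A) \<union> (\<Union>(m, n)\<in>J2. (\<lambda>y. p^m*q^n*y) ` K)"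
      unfolding J1_def J2_def by blast
  qed
  have weight: "(\<Sum>(m, n)\<in>J1. w m n * t) + (\<Sum>(m, n)\<in>J2. w m n * (t + t)) = cover_factor s N * t"
  proof -
    have "(\<Sum>(m, n)\<in>J1. w m n * t) = (\<Sum>(m, n)\<in>J1. w m n) * t"
      by (simp add: sum_distrib_right case_prod_beta)
    moreover have "(\<Sum>(m, n)\<in>J2. w m n * (t + t)) = 2 * (\<Sum>(m, n)\<in>J2. w m n) * t"
      by (simp add: sum_distrib_left sum_distrib_right case_prod_beta mult.commute mult.left_commute)
    ultimately show ?thesis
      unfolding cover_factor_def J1_def J2_def w_def by (simp add: algebra_simps)
  qed
  show ?thesis using has_fin_cover_mono[OF sub order_refl order_refl cover] unfolding weight .
qed

lemma cover_factor_eventually_less_1: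
  assumes s: "0 < s" and g: "1/2 < (1 - p powr s) * (1 - q powr s)"
  obtains N where "1 \<le> N" "0 \<le> cover_factor s N" "cover_factor s N < 1"
proof -
  define a where "a = p powr s"
  define b where "b = q powr s"
  define \<rho> where "\<rho> = max a b"
  have ab: "0 < a" "a < 1" "0 < b" "b < 1" using powr_p_q_bounds[OF s] by (simp_all add: a_def b_def)
  have "1 / 2 < (1-a)*(1-b)" using g by (simp add: a_def b_def)
  then have c1: "1 / ((1-a)*(1-b)) - 1 < 1" by (simp add: divide_less_eq)
  have "(\<lambda>N. 2 * ((real N + 1) * \<rho>^N)) \<longlonglongrightarrow> 2 * 0"
    using ab by (intro tendsto_mult tendsto_const tendsto_Suc_times_power_zero) (auto simp: \<rho>_def)
  then have "(\<lambda>N. 2 * ((real N + 1) * \<rho>^N)) \<longlonglongrightarrow> 0" by simp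
  then have "\<forall>\<^sub>F N in sequentially. 2 * ((real N + 1) * \<rho>^N) < 1 - (1 / ((1-a)*(1-b)) - 1)"
    by (rule order_tendstoD(2)) (use c1 in linarith)
  then obtain N where N: "1 \<le> N" "2 * ((real N + 1) * \<rho>^N) < 1 - (1 / ((1-a)*(1-b)) - 1)"
    unfolding eventually_sequentially by (metis le_add2 max.cobounded1 max.cobounded2 order_trans)
  show ?thesis
  proof (rule that[OF N(1)])
    show "0 \<le> cover_factor s N"
      unfolding cover_factor_def by (intro add_nonneg_nonneg mult_nonneg_nonneg sum_nonneg) auto
    have "cover_factor s N \<le> (1 / ((1-a)*(1-b)) - 1) + 2 * ((real N + 1) * \<rho>^N)"
      unfolding cover_factor_def a_def[symmetric] b_def[symmetric] using ab N(1)
      by (intro add_mono mult_left_mono sum_pairs_sum_less_le sum_pairs_sum_eq_le) (auto simp: \<rho>_def)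
    then show "cover_factor s N < 1" using N(2) by linarith
  qed
qed

lemma hausdorff_measure_K_eq_0:
  assumes s: "0 < s" and g: "1/2 < (1 - p powr s) * (1 - q powr s)"
  shows "hausdorff_measure s K = 0"
proof (rule hausdorff_measure_eq_0_if_small_covers)
  fix \<delta> e :: real assume \<delta>: "0 < \<delta>" and e: "0 < e"
  obtain N where N: "1 \<le> N" "0 \<le> cover_factor s N" "cover_factor s N < 1"
    using cover_factor_eventually_less_1[OF s g] .
  obtain j where j: "1 / 2^j < \<delta>"
    using real_arch_pow_inv[of \<delta> "1/2"] \<delta> by (auto simp: power_one_over)
  define t where "t = (2 * (1/2) powr s)^j"
  have "B \<subseteq> {0..1}" using B_subset_K Kpq_attractor(4) by blast
  then have B: "has_fin_cover s \<delta> B t"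
    using has_fin_cover_unit_interval[OF s, of j] j unfolding t_def
    by (elim has_fin_cover_mono[rotated 3]) auto
  have iterate: "has_fin_cover s \<delta> B (cover_factor s N ^ k * t)" for k
  proof (induction k)
    case 0
    show ?case using B by simp
  next
    case (Suc k)
    show ?case using has_fin_cover_B_step[OF s \<delta> N(1) Suc.IH] by (simp add: mult.assoc)
  qed
  have "(\<lambda>k. 2 * t * cover_factor s N ^ k) \<longlonglongrightarrow> 2 * t * 0"
    using N by (intro tendsto_mult tendsto_const LIMSEQ_power_zero) auto
  then have "\<forall>\<^sub>F k in sequentially. 2 * t * cover_factor s N ^ k < e"
    using e by (intro order_tendstoD(2)) auto
  then obtain k where "2 * t * cover_factor s N ^ k < e" by (auto dest: eventually_happens)
  moreover have "has_fin_cover s \<delta> K (cover_factor s N ^ k * t + cover_factor s N ^ k * t)"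
    using has_fin_cover_A_K(2)[OF s iterate] .
  ultimately show "\<exists>t\<le>e. has_fin_cover s \<delta> K t"
    by (intro exI[of _ "cover_factor s N ^ k * t + cover_factor s N ^ k * t"]) (simp add: algebra_simps)
qed

lemma ratio_sum_eventually_ge_2:
  assumes s: "0 < s" and g: "(1 - p powr s) * (1 - q powr s) < 1/2"
  obtains N where "2 \<le> N" "2 \<le> (\<Sum>m<N. (p powr s)^m) * (\<Sum>n<N. (q powr s)^n)"
proof -
  define a where "a = p powr s"
  define b where "b = q powr s"
  have ab: "0 < a" "a < 1" "0 < b" "b < 1" using powr_p_q_bounds[OF s] by (simp_all add: a_def b_def)
  have "(\<lambda>N. (\<Sum>m<N. a^m) * (\<Sum>n<N. b^n)) \<longlonglongrightarrow> (1/(1-a)) * (1/(1-b))"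
    using geometric_sums[of a] geometric_sums[of b] ab by (intro tendsto_mult) (auto simp: sums_def)
  moreover have "2 < (1/(1-a)) * (1/(1-b))"
  proof -
    have "0 < (1-a)*(1-b)" "2 * ((1-a)*(1-b)) < 1" using g ab by (simp_all add: a_def b_def)
    then show ?thesis by (simp add: less_divide_eq)
  qed
  ultimately have "\<forall>\<^sub>F N in sequentially. 2 < (\<Sum>m<N. a^m) * (\<Sum>n<N. b^n)"
    by (rule order_tendstoD(1))
  then obtain N where "2 \<le> N" "2 < (\<Sum>m<N. a^m) * (\<Sum>n<N. b^n)"
    unfolding eventually_sequentially by (metis nat_le_linear le_refl order_trans)
  then show ?thesis using that unfolding a_def b_def by simp
qed

text \<open>The copies \<open>p\<^sup>m q\<^sup>n A = (x \<mapsto> p\<^sup>m q\<^sup>n (1 - x)) B\<close>, \<open>0 < m + n\<close>, lie in \<open>B\<close>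
  and are disjoint by the twofold Cantor condition.\<close>
lemma hausdorff_measure_K_nonzero:
  assumes tf: "twofold_cantor p q" and s: "0 < s" and g: "(1 - p powr s) * (1 - q powr s) < 1/2"
  shows "hausdorff_measure s K \<noteq> 0"
proof -
  obtain N where N: "2 \<le> N" "2 \<le> (\<Sum>m<N. (p powr s)^m) * (\<Sum>n<N. (q powr s)^n)"
    using ratio_sum_eventually_ge_2[OF s g] .
  define I where "I = {..<N} \<times> {..<N} - {(0::nat, 0::nat)}"
  define r where "r = (\<lambda>(m::nat, n::nat). - (p^m * q^n))"
  define c where "c = (\<lambda>(m::nat, n::nat). p^m * q^n)"
  have copy: "(\<lambda>x. r i * x + c i) ` B = (\<lambda>y. p^m*q^n*y) ` A" if "i = (m, n)" for i m n
    unfolding A_eq_reflect_B image_image that r_def c_def by (simp add: algebra_simps)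
  have "hausdorff_measure s B \<noteq> 0"
  proof (rule hausdorff_measure_nonzero_if_similar_copies[OF s compact_B _ _ _ _ _ _ ])
    show "B \<noteq> {}" using A_nonempty A_eq_reflect_B by auto
    show "finite I" by (simp add: I_def)
    show "\<exists>i\<in>I. \<exists>j\<in>I. i \<noteq> j" using N(1) by (intro bexI[of _ "(1, 0)"] bexI[of _ "(0, 1)"]) (auto simp: I_def)
    show "r i \<noteq> 0" for i using p q by (auto simp: r_def split: prod.split)
    have "(\<Sum>i\<in>I. \<bar>r i\<bar> powr s) = (\<Sum>(m, n)\<in>{..<N} \<times> {..<N}. (p powr s)^m * (q powr s)^n) - 1"
      using p q N(1) by (simp add: I_def r_def sum_diff1 case_prod_beta powr_mult powr_power_base)
    then show "1 \<le> (\<Sum>i\<in>I. \<bar>r i\<bar> powr s)"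
      using N(2) by (simp add: sum_product sum.cartesian_product)
    show "(\<lambda>x. r i * x + c i) ` B \<subseteq> B" if "i \<in> I" for i
    proof -
      obtain m n where i: "i = (m, n)" by fastforce
      moreover have "(m, n) \<noteq> (0, 0)" using that i by (simp add: I_def)
      ultimately show ?thesis unfolding copy[OF i] using scale_pow_mem_B A_subset_K by blast
    qed
    show "(\<lambda>x. r i * x + c i) ` B \<inter> (\<lambda>x. r j * x + c j) ` B = {}" if "i \<in> I" "j \<in> I" "i \<noteq> j" for i j
    proof -
      obtain m n k l where ij: "i = (m, n)" "j = (k, l)" by fastforce
      show ?thesis
        unfolding copy[OF ij(1)] copy[OF ij(2)]
        using twofold_scaled_A_disjoint[OF tf, of _ _ m n k l] that(3) ij by blast
    qed
  qed
  then show ?thesis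
    using hausdorff_measure_mono[OF B_subset_K, of s] by (metis le_zero_eq)
qed

lemma dimension_equation_root:
  obtains d where "0 < d" "(1 - p powr d) * (1 - q powr d) = 1/2"
    "\<And>s. 0 \<le> s \<Longrightarrow> s < d \<Longrightarrow> (1 - p powr s) * (1 - q powr s) < 1/2"
    "\<And>s. d < s \<Longrightarrow> 1/2 < (1 - p powr s) * (1 - q powr s)"
proof -
  define g where "g s = (1 - p powr s) * (1 - q powr s)" for s
  have mono: "g s < g t" if "0 \<le> s" "s < t" for s t
  proof -
    have "p powr t < p powr s" "q powr t < q powr s" using p q that by (auto intro: powr_less_mono')
    moreover have "p powr s \<le> 1" "q powr s \<le> 1" using p q that by (auto intro: powr_le1)
    ultimately show ?thesis unfolding g_def by (intro mult_strict_mono) auto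
  qed
  have "g 0 = 0" using p q by (simp add: g_def)
  moreover have "1/2 \<le> g 2"
  proof -
    have "p^2 \<le> (1/2)^2" "q^2 \<le> (1/2)^2" using p q by (intro power_mono; simp)+
    then have "p^2 \<le> 1/4" "q^2 \<le> 1/4" by (simp_all add: power_divide)
    then have "3/4 \<le> 1 - p powr 2" "3/4 \<le> 1 - q powr 2" using p q by simp_all
    then have "(3/4) * (3/4) \<le> g 2" unfolding g_def by (intro mult_mono) auto
    then show ?thesis by simp
  qed
  moreover have "continuous_on {0..2} g" unfolding g_def using p q by (intro continuous_intros) auto
  ultimately obtain d where d: "0 \<le> d" "d \<le> 2" "g d = 1/2"
    using IVT'[of g 0 "1/2" 2] by auto
  have "0 < d" using d \<open>g 0 = 0\<close> by (cases "d = 0") auto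
  show ?thesis
  proof (rule that)
    show "0 < d" by fact
    show "(1 - p powr d) * (1 - q powr d) = 1/2" using d(3) by (simp add: g_def)
    show "(1 - p powr s) * (1 - q powr s) < 1/2" if "0 \<le> s" "s < d" for s
      using mono[OF that] d(3) by (simp add: g_def)
    show "1/2 < (1 - p powr s) * (1 - q powr s)" if "d < s" for s
      using mono[of d s] that d by (simp add: g_def)
  qed
qed

end

theorem theorem4:
  fixes p q :: real
  assumes "0 < p" "p < 1/2" "0 < q" "q < 1/2"
    and "twofold_cantor p q"
  shows "p powr (hausdorff_dim (Kpq p q)) + q powr (hausdorff_dim (Kpq p q))
           - (p * q) powr (hausdorff_dim (Kpq p q)) = 1/2"
proof -
  interpret contraction_pair p q using assms(1-4) by unfold_locales
  obtain d where d: "0 < d" "(1 - p powr d) * (1 - q powr d) = 1/2"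
    and below: "\<And>s. 0 \<le> s \<Longrightarrow> s < d \<Longrightarrow> (1 - p powr s) * (1 - q powr s) < 1/2"
    and above: "\<And>s. d < s \<Longrightarrow> 1/2 < (1 - p powr s) * (1 - q powr s)"
    using dimension_equation_root by blast
  have "hausdorff_dim K = d"
  proof (rule hausdorff_dim_eqI)
    show "0 \<le> d" using d(1) by simp
    show "hausdorff_measure s K = 0" if "d < s" for s
      using hausdorff_measure_K_eq_0 above[OF that] that d(1) by simp
    show "hausdorff_measure s K \<noteq> 0" if "0 \<le> s" "s < d" for s
    proof (cases "s = 0")
      case True
      then show ?thesis using hausdorff_measure_zero_dim_nonempty Kpq_attractor(2) by simp
    next
      case False
      then show ?thesis using hausdorff_measure_K_nonzero[OF assms(5)] below[OF that] that by simp
    qed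
  qed
  then show ?thesis using d(2) by (simp add: powr_mult algebra_simps)
qed

end
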